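(* The adjunction $i_\ell:\mathbf{Gr}\rightleftarrows\mathbf{Gr}_\ell:(-)^\circ$, with both categories carrying their Matsushita model structures, is a Quillen equivalence.
   Context: A simplicial complex consists of a vertex set and a collection of nonempty finite subsets (simplices) containing all singletons and closed under nonempty subsets; maps are vertex functions preserving simplices; $\mathbf{Cpx}$ is the category. $\mathbf{Gr}$ (reflexive graphs) is the full subcategory of complexes whose simplices have at most two elements; $\mathrm{C}\ell:\mathbf{Gr}\to\mathbf{Cpx}$ is the clique complex functor. $\mathbf{\Delta}^n$ is the complex on $\{0,\dots,n\}$ with all nonempty subsets simplices, $\mathrm{Sing}(K)_n=\mathbf{Cpx}(\mathbf{\Delta}^n,K)$, $\mathrm{Ex}$ is the right adjoint of barycentric subdivision. Matsushita model structure on $\mathbf{Gr}$: $f$ is a weak equivalence iff $\mathrm{Sing}\,\mathrm{C}\ell(f)$ is a weak homotopy equivalence, a fibration iff $\mathrm{Ex}^2\mathrm{Sing}\,\mathrm{C}\ell(f)$ is a Kan fibration, cofibrations by left lifting against trivial fibrations. A loop graph is a set with a symmetric relation (looped vertices are those related to themselves); maps preserve the relation; $\mathbf{Gr}_\ell$ is the category. $i_\ell$ regards a reflexive graph as a loop graph with all vertices looped; its right adjoint $(-)^\circ$ takes the maximal reflexive subgraph (induced on looped vertices). Matsushita model structure on $\mathbf{Gr}_\ell$: $f$ is a weak equivalence (fibration) iff $f^\circ$ is one in the Matsushita model structure on $\mathbf{Gr}$; cofibrations by left lifting against trivial fibrations. *)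

theory Defs
  imports "HOL-Homology.Homology"
begin

text \<open>A simplicial complex is a pair (vertex set, set of simplices).\<close>
type_synonym 'a cpx = "'a set \<times> 'a set set"

definition is_cpx :: "'a cpx \<Rightarrow> bool" where
  "is_cpx K \<longleftrightarrow>
     (\<forall>\<sigma>\<in>snd K. finite \<sigma> \<and> \<sigma> \<noteq> {} \<and> \<sigma> \<subseteq> fst K) \<and>
     (\<forall>v\<in>fst K. {v} \<in> snd K) \<and>
     (\<forall>\<sigma>\<in>snd K. \<forall>\<tau>. \<tau> \<subseteq> \<sigma> \<and> \<tau> \<noteq> {} \<longrightarrow> \<tau> \<in> snd K)"

definition cpx_map :: "'a cpx \<Rightarrow> 'b cpx \<Rightarrow> ('a \<Rightarrow> 'b) \<Rightarrow> bool" where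
  "cpx_map K L f \<longleftrightarrow> f \<in> fst K \<rightarrow> fst L \<and> (\<forall>\<sigma>\<in>snd K. f ` \<sigma> \<in> snd L)"

text \<open>Reflexive graphs: complexes whose simplices have at most two elements
  (full subcategory Gr of Cpx).\<close>
definition is_rgraph :: "'a cpx \<Rightarrow> bool" where
  "is_rgraph K \<longleftrightarrow> is_cpx K \<and> (\<forall>\<sigma>\<in>snd K. card \<sigma> \<le> 2)"

definition clique_cpx :: "'a cpx \<Rightarrow> 'a cpx" where
  "clique_cpx G = (fst G, {\<sigma>. finite \<sigma> \<and> \<sigma> \<noteq> {} \<and> \<sigma> \<subseteq> fst G \<and>
                                (\<forall>x\<in>\<sigma>. \<forall>y\<in>\<sigma>. {x, y} \<in> snd G)})"

definition cpx_simplex :: "nat \<Rightarrow> nat cpx" where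
  "cpx_simplex n = ({0..n}, {\<sigma>. \<sigma> \<noteq> {} \<and> \<sigma> \<subseteq> {0..n}})"

text \<open>A simplicial set is given by its sets of n-simplices together with the
  action  act m n \<theta> : X_n \<rightarrow> X_m  of every monotone map \<theta> : [m] \<rightarrow> [n].\<close>
type_synonym 'x sset = "(nat \<Rightarrow> 'x set) \<times> (nat \<Rightarrow> nat \<Rightarrow> (nat \<Rightarrow> nat) \<Rightarrow> 'x \<Rightarrow> 'x)"

definition simp_op :: "nat \<Rightarrow> nat \<Rightarrow> (nat \<Rightarrow> nat) \<Rightarrow> bool" where
  "simp_op m n \<theta> \<longleftrightarrow> \<theta> \<in> {0..m} \<rightarrow> {0..n} \<and> \<theta> \<in> extensional {0..m} \<and>
     (\<forall>i j. i \<le> j \<and> j \<le> m \<longrightarrow> \<theta> i \<le> \<theta> j)"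

definition is_sset :: "'x sset \<Rightarrow> bool" where
  "is_sset X \<longleftrightarrow>
     (\<forall>m n \<theta> x. simp_op m n \<theta> \<and> x \<in> fst X n \<longrightarrow> snd X m n \<theta> x \<in> fst X m) \<and>
     (\<forall>n x. x \<in> fst X n \<longrightarrow> snd X n n (restrict id {0..n}) x = x) \<and>
     (\<forall>l m n \<phi> \<theta> x. simp_op l m \<phi> \<and> simp_op m n \<theta> \<and> x \<in> fst X n \<longrightarrow>
        snd X l n (restrict (\<theta> \<circ> \<phi>) {0..l}) x = snd X l m \<phi> (snd X m n \<theta> x))"

definition sset_map :: "'x sset \<Rightarrow> 'y sset \<Rightarrow> (nat \<Rightarrow> 'x \<Rightarrow> 'y) \<Rightarrow> bool" where
  "sset_map X Y f \<longleftrightarrow>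
     (\<forall>n. f n \<in> fst X n \<rightarrow> fst Y n) \<and>
     (\<forall>m n \<theta> x. simp_op m n \<theta> \<and> x \<in> fst X n \<longrightarrow> f m (snd X m n \<theta> x) = snd Y m n \<theta> (f n x))"

definition Sing :: "'a cpx \<Rightarrow> (nat \<Rightarrow> 'a) sset" where
  "Sing K = (\<lambda>n. {\<sigma> \<in> extensional {0..n}. cpx_map (cpx_simplex n) K \<sigma>},
             \<lambda>m n \<theta> \<sigma>. restrict (\<sigma> \<circ> \<theta>) {0..m})"

definition sing_map :: "('a \<Rightarrow> 'b) \<Rightarrow> nat \<Rightarrow> (nat \<Rightarrow> 'a) \<Rightarrow> (nat \<Rightarrow> 'b)" where
  "sing_map f = (\<lambda>n \<sigma>. restrict (f \<circ> \<sigma>) {0..n})"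

definition std_sset :: "nat \<Rightarrow> (nat \<Rightarrow> nat) sset" where
  "std_sset n = (\<lambda>m. {\<theta>. simp_op m n \<theta>}, \<lambda>l m \<phi> \<theta>. restrict (\<theta> \<circ> \<phi>) {0..l})"

definition horn :: "nat \<Rightarrow> nat \<Rightarrow> (nat \<Rightarrow> nat) sset" where
  "horn n k = (\<lambda>m. {\<theta>. simp_op m n \<theta> \<and> insert k (\<theta> ` {0..m}) \<noteq> {0..n}},
               \<lambda>l m \<phi> \<theta>. restrict (\<theta> \<circ> \<phi>) {0..l})"

definition kan_fibration :: "'x sset \<Rightarrow> 'y sset \<Rightarrow> (nat \<Rightarrow> 'x \<Rightarrow> 'y) \<Rightarrow> bool" where
  "kan_fibration E B p \<longleftrightarrow> sset_map E B p \<and>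
     (\<forall>n k u v. 1 \<le> n \<and> k \<le> n \<and> sset_map (horn n k) E u \<and> sset_map (std_sset n) B v \<and>
        (\<forall>m. \<forall>\<theta>\<in>fst (horn n k) m. p m (u m \<theta>) = v m \<theta>) \<longrightarrow>
        (\<exists>w. sset_map (std_sset n) E w \<and>
             (\<forall>m. \<forall>\<theta>\<in>fst (horn n k) m. w m \<theta> = u m \<theta>) \<and>
             (\<forall>m. \<forall>\<theta>\<in>fst (std_sset n) m. p m (w m \<theta>) = v m \<theta>)))"

text \<open>Barycentric subdivision sd \<Delta>[n] = nerve of the poset of nonempty subsets of
  {0..n}, and Ex(X)_n = sSet(sd \<Delta>[n], X).\<close>
definition sd_carrier :: "nat \<Rightarrow> nat \<Rightarrow> (nat \<Rightarrow> nat set) set" where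
  "sd_carrier n m = {c \<in> extensional {0..m}.
      c \<in> {0..m} \<rightarrow> {\<sigma>. \<sigma> \<noteq> {} \<and> \<sigma> \<subseteq> {0..n}} \<and> (\<forall>i j. i \<le> j \<and> j \<le> m \<longrightarrow> c i \<subseteq> c j)}"

definition sd_delta :: "nat \<Rightarrow> (nat \<Rightarrow> nat set) sset" where
  "sd_delta n = (sd_carrier n, \<lambda>l m \<phi> c. restrict (c \<circ> \<phi>) {0..l})"

definition Ex :: "'x sset \<Rightarrow> (nat \<Rightarrow> (nat \<Rightarrow> nat set) \<Rightarrow> 'x) sset" where
  "Ex X = (\<lambda>n. {f. sset_map (sd_delta n) X f \<and> (\<forall>k. f k \<in> extensional (sd_carrier n k))},
           \<lambda>m n \<theta> f. \<lambda>k. restrict (\<lambda>c. f k (restrict (\<lambda>i. \<theta> ` c i) {0..k})) (sd_carrier m k))"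

definition ex_map :: "(nat \<Rightarrow> 'x \<Rightarrow> 'y) \<Rightarrow> nat \<Rightarrow> (nat \<Rightarrow> (nat \<Rightarrow> nat set) \<Rightarrow> 'x)
                       \<Rightarrow> (nat \<Rightarrow> (nat \<Rightarrow> nat set) \<Rightarrow> 'y)" where
  "ex_map g = (\<lambda>n f. \<lambda>k. restrict (\<lambda>c. g k (f k c)) (sd_carrier n k))"

definition simplex_top :: "nat \<Rightarrow> (nat \<Rightarrow> real) topology" where
  "simplex_top n = subtopology (powertop_real UNIV) (standard_simplex n)"

text \<open>Affine map \<Delta>^m \<rightarrow> \<Delta>^n induced by \<theta> : [m] \<rightarrow> [n].\<close>
definition push :: "(nat \<Rightarrow> nat) \<Rightarrow> nat \<Rightarrow> (nat \<Rightarrow> real) \<Rightarrow> (nat \<Rightarrow> real)" where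
  "push \<theta> m t = (\<lambda>j. \<Sum>i\<in>{i. i \<le> m \<and> \<theta> i = j}. t i)"

definition real_raw :: "'x sset \<Rightarrow> (nat \<times> 'x \<times> (nat \<Rightarrow> real)) set" where
  "real_raw X = {(n, x, t). x \<in> fst X n \<and> t \<in> standard_simplex n}"

definition real_rel :: "'x sset \<Rightarrow> ((nat \<times> 'x \<times> (nat \<Rightarrow> real)) \<times> (nat \<times> 'x \<times> (nat \<Rightarrow> real))) set" where
  "real_rel X = {((m, snd X m n \<theta> x, t), (n, x, push \<theta> m t)) | m n \<theta> x t.
                    simp_op m n \<theta> \<and> x \<in> fst X n \<and> t \<in> standard_simplex m}"

definition real_cls :: "'x sset \<Rightarrow> nat \<times> 'x \<times> (nat \<Rightarrow> real) \<Rightarrow> (nat \<times> 'x \<times> (nat \<Rightarrow> real)) set" where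
  "real_cls X p = ((real_rel X \<union> (real_rel X)\<inverse>)\<^sup>*) `` {p}"

text \<open>|X| = (\<Union>_n X_n \<times> \<Delta>^n)/\<sim> with the quotient (final) topology.\<close>
definition realization :: "'x sset \<Rightarrow> (nat \<times> 'x \<times> (nat \<Rightarrow> real)) set topology" where
  "realization X = topology (\<lambda>U. U \<subseteq> real_cls X ` real_raw X \<and>
      (\<forall>n x. x \<in> fst X n \<longrightarrow>
         openin (simplex_top n) {t \<in> standard_simplex n. real_cls X (n, x, t) \<in> U}))"

definition realization_map ::
  "'x sset \<Rightarrow> 'y sset \<Rightarrow> (nat \<Rightarrow> 'x \<Rightarrow> 'y) \<Rightarrow>
     (nat \<times> 'x \<times> (nat \<Rightarrow> real)) set \<Rightarrow> (nat \<times> 'y \<times> (nat \<Rightarrow> real)) set" where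
  "realization_map X Y f c =
     (SOME d. \<exists>n x t. (n, x, t) \<in> c \<inter> real_raw X \<and> d = real_cls Y (n, f n x, t))"

definition sphere_base :: "nat \<Rightarrow> real" where
  "sphere_base = (\<lambda>i. if i = 0 then 1 else 0)"

definition weak_homotopy_equiv :: "'p topology \<Rightarrow> 'q topology \<Rightarrow> ('p \<Rightarrow> 'q) \<Rightarrow> bool" where
  "weak_homotopy_equiv X Y g \<longleftrightarrow> continuous_map X Y g \<and>
     (\<forall>y\<in>topspace Y. \<exists>x\<in>topspace X. path_component_of Y (g x) y) \<and>
     (\<forall>n::nat. \<forall>x\<in>topspace X.
        (\<forall>b. continuous_map (nsphere n) Y b \<and> b sphere_base = g x \<longrightarrow>
           (\<exists>a. continuous_map (nsphere n) X a \<and> a sphere_base = x \<and>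
                homotopic_with (\<lambda>h. h sphere_base = g x) (nsphere n) Y (g \<circ> a) b)) \<and>
        (\<forall>a a'. continuous_map (nsphere n) X a \<and> a sphere_base = x \<and>
                continuous_map (nsphere n) X a' \<and> a' sphere_base = x \<and>
                homotopic_with (\<lambda>h. h sphere_base = g x) (nsphere n) Y (g \<circ> a) (g \<circ> a') \<longrightarrow>
                homotopic_with (\<lambda>h. h sphere_base = x) (nsphere n) X a a'))"

definition sset_weq :: "'x sset \<Rightarrow> 'y sset \<Rightarrow> (nat \<Rightarrow> 'x \<Rightarrow> 'y) \<Rightarrow> bool" where
  "sset_weq X Y f \<longleftrightarrow> sset_map X Y f \<and>
     weak_homotopy_equiv (realization X) (realization Y) (realization_map X Y f)"

definition gr_weq :: "'a cpx \<Rightarrow> 'b cpx \<Rightarrow> ('a \<Rightarrow> 'b) \<Rightarrow> bool" where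
  "gr_weq G H f \<longleftrightarrow> cpx_map G H f \<and>
     sset_weq (Sing (clique_cpx G)) (Sing (clique_cpx H)) (sing_map f)"

definition gr_fib :: "'a cpx \<Rightarrow> 'b cpx \<Rightarrow> ('a \<Rightarrow> 'b) \<Rightarrow> bool" where
  "gr_fib G H f \<longleftrightarrow> cpx_map G H f \<and>
     kan_fibration (Ex (Ex (Sing (clique_cpx G)))) (Ex (Ex (Sing (clique_cpx H))))
                   (ex_map (ex_map (sing_map f)))"

text \<open>Cofibrant objects: the unique map from the empty graph has the left lifting
  property against all trivial fibrations (whose graphs have vertex type 'c).\<close>
definition gr_cofibrant :: "'c itself \<Rightarrow> 'a cpx \<Rightarrow> bool" where
  "gr_cofibrant (ty :: 'c itself) X \<longleftrightarrow> is_rgraph X \<and>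
     (\<forall>(E::'c cpx) (B::'c cpx) p v. is_rgraph E \<and> is_rgraph B \<and> gr_fib E B p \<and> gr_weq E B p \<and>
        cpx_map X B v \<longrightarrow> (\<exists>h. cpx_map X E h \<and> (\<forall>x\<in>fst X. p (h x) = v x)))"

type_synonym 'a lgraph = "'a set \<times> ('a \<Rightarrow> 'a \<Rightarrow> bool)"

definition is_lgraph :: "'a lgraph \<Rightarrow> bool" where
  "is_lgraph G \<longleftrightarrow> (\<forall>x y. snd G x y \<longrightarrow> x \<in> fst G \<and> y \<in> fst G) \<and>
                     (\<forall>x y. snd G x y \<longrightarrow> snd G y x)"

definition lg_map :: "'a lgraph \<Rightarrow> 'b lgraph \<Rightarrow> ('a \<Rightarrow> 'b) \<Rightarrow> bool" where
  "lg_map G H f \<longleftrightarrow> f \<in> fst G \<rightarrow> fst H \<and> (\<forall>x y. snd G x y \<longrightarrow> snd H (f x) (f y))"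

text \<open>i_l : regard a reflexive graph as a loop graph (all vertices looped).\<close>
definition incl_l :: "'a cpx \<Rightarrow> 'a lgraph" where
  "incl_l G = (fst G, \<lambda>x y. {x, y} \<in> snd G)"

definition looped :: "'a lgraph \<Rightarrow> 'a set" where
  "looped G = {v \<in> fst G. snd G v v}"

text \<open>(-)\<degree>: maximal reflexive subgraph, induced on the looped vertices.\<close>
definition core :: "'a lgraph \<Rightarrow> 'a cpx" where
  "core G = (looped G, {\<sigma>. \<sigma> \<subseteq> looped G \<and> (\<exists>x y. \<sigma> = {x, y} \<and> snd G x y)})"

definition lg_weq :: "'a lgraph \<Rightarrow> 'b lgraph \<Rightarrow> ('a \<Rightarrow> 'b) \<Rightarrow> bool" where
  "lg_weq G H f \<longleftrightarrow> lg_map G H f \<and> gr_weq (core G) (core H) f"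

definition lg_fib :: "'a lgraph \<Rightarrow> 'b lgraph \<Rightarrow> ('a \<Rightarrow> 'b) \<Rightarrow> bool" where
  "lg_fib G H f \<longleftrightarrow> lg_map G H f \<and> gr_fib (core G) (core H) f"

text \<open>Fibrant objects: the map to the terminal loop graph (one looped vertex) is a fibration.\<close>
definition lg_fibrant :: "'a lgraph \<Rightarrow> bool" where
  "lg_fibrant Y \<longleftrightarrow> is_lgraph Y \<and> lg_fib Y ({()}, \<lambda>_ _. True) (\<lambda>_. ())"

end

theory Submission
  imports Defs
begin

text \<open>The model structure on loop graphs is created by \<open>(-)\<degree>\<close>: a map of loop graphs is a
  fibration or weak equivalence exactly when its restriction to looped vertices is one.
  Hence the right adjoint preserves fibrations and trivial fibrations by construction.
  Moreover the unit is an isomorphism, \<open>(i\<^sub>\<ell> X)\<degree> = X\<close>, since every vertex of a reflexive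
  graph becomes looped; so a map \<open>i\<^sub>\<ell> X \<rightarrow> Y\<close> and its adjunct \<open>X \<rightarrow> Y\<degree>\<close> are the same vertex
  function between the same reflexive graphs, and one is a weak equivalence iff the other is.\<close>

lemma rgraph_simplex_doubleton:
  assumes "is_rgraph X" "\<sigma> \<in> snd X"
  obtains x y where "\<sigma> = {x, y}"
proof -
  have "finite \<sigma>" "\<sigma> \<noteq> {}" "card \<sigma> \<le> 2"
    using assms unfolding is_rgraph_def is_cpx_def by auto
  then have "card \<sigma> = 1 \<or> card \<sigma> = 2"
    using card_gt_0_iff[of \<sigma>] by linarith
  then show thesis
  proof
    assume "card \<sigma> = 1"
    then show thesis
      using that by (auto simp: card_1_singleton_iff)
  next
    assume "card \<sigma> = 2"
    then show thesis
      using that by (auto simp: card_2_iff)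
  qed
qed

lemma is_lgraph_incl_l:
  assumes "is_cpx X"
  shows "is_lgraph (incl_l X)"
proof -
  have "\<sigma> \<subseteq> fst X" if "\<sigma> \<in> snd X" for \<sigma>
    using assms that unfolding is_cpx_def by blast
  then show ?thesis
    unfolding is_lgraph_def incl_l_def by (auto simp: insert_commute)
qed

lemma is_rgraph_core: "is_rgraph (core Y)"
proof -
  have simplices: "finite \<sigma> \<and> \<sigma> \<noteq> {} \<and> \<sigma> \<subseteq> fst (core Y)" if "\<sigma> \<in> snd (core Y)" for \<sigma>
    using that unfolding core_def by auto
  have loop: "{v} \<in> snd (core Y)" if "v \<in> fst (core Y)" for v
    using that unfolding core_def looped_def by auto
  have faces: "\<tau> \<in> snd (core Y)"
    if \<sigma>: "\<sigma> \<in> snd (core Y)" and \<tau>: "\<tau> \<subseteq> \<sigma>" "\<tau> \<noteq> {}" for \<sigma> \<tau>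
  proof -
    obtain x y where "\<sigma> = {x, y}" "x \<in> fst (core Y)" "y \<in> fst (core Y)"
      using \<sigma> unfolding core_def by auto
    then have "\<tau> = {x} \<or> \<tau> = {y} \<or> \<tau> = \<sigma>"
      using \<tau> by auto
    then show ?thesis
      using loop[OF \<open>x \<in> fst (core Y)\<close>] loop[OF \<open>y \<in> fst (core Y)\<close>] \<sigma> by blast
  qed
  have "is_cpx (core Y)"
    unfolding is_cpx_def using simplices loop faces by blast
  moreover have "card \<sigma> \<le> 2" if "\<sigma> \<in> snd (core Y)" for \<sigma>
    using that by (auto simp: core_def card_insert_if)
  ultimately show ?thesis
    by (simp add: is_rgraph_def)
qed

lemma core_incl_l:
  assumes "is_rgraph X"
  shows "core (incl_l X) = X"
proof -
  have cpx: "is_cpx X"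
    using assms by (simp add: is_rgraph_def)
  then have looped: "looped (incl_l X) = fst X"
    unfolding looped_def incl_l_def is_cpx_def by auto
  have "snd X \<subseteq> snd (core (incl_l X))"
  proof
    fix \<sigma> assume "\<sigma> \<in> snd X"
    moreover obtain x y where "\<sigma> = {x, y}"
      using rgraph_simplex_doubleton[OF assms \<open>\<sigma> \<in> snd X\<close>] .
    moreover have "\<sigma> \<subseteq> fst X"
      using cpx \<open>\<sigma> \<in> snd X\<close> unfolding is_cpx_def by blast
    ultimately show "\<sigma> \<in> snd (core (incl_l X))"
      using looped unfolding core_def incl_l_def by auto
  qed
  moreover have "snd (core (incl_l X)) \<subseteq> snd X"
    unfolding core_def incl_l_def by auto
  ultimately show ?thesis
    using looped by (simp add: core_def prod_eq_iff)
qed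

lemma lg_map_incl_l_iff_cpx_map_core:
  assumes X: "is_rgraph X" and Y: "is_lgraph Y"
  shows "lg_map (incl_l X) Y f \<longleftrightarrow> cpx_map X (core Y) f"
proof
  have singleton: "{x} \<in> snd X" if "x \<in> fst X" for x
    using X that unfolding is_rgraph_def is_cpx_def by blast
  have vertices: "\<sigma> \<subseteq> fst X" if "\<sigma> \<in> snd X" for \<sigma>
    using X that unfolding is_rgraph_def is_cpx_def by blast
  assume f: "lg_map (incl_l X) Y f"
  then have edge: "snd Y (f x) (f y)" if "{x, y} \<in> snd X" for x y
    using that unfolding lg_map_def incl_l_def by simp
  have looped: "f x \<in> looped Y" if "x \<in> fst X" for x
    using f edge[of x x] singleton[OF that] that
    unfolding lg_map_def incl_l_def looped_def by auto
  have "f ` \<sigma> \<in> snd (core Y)" if \<sigma>: "\<sigma> \<in> snd X" for \<sigma>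
  proof -
    obtain x y where xy: "\<sigma> = {x, y}"
      using rgraph_simplex_doubleton[OF X \<sigma>] .
    then have "f x \<in> looped Y" "f y \<in> looped Y" "snd Y (f x) (f y)"
      using looped vertices[OF \<sigma>] edge \<sigma> by auto
    then show ?thesis
      unfolding core_def xy by auto
  qed
  moreover have "f \<in> fst X \<rightarrow> fst (core Y)"
    using looped unfolding core_def by auto
  ultimately show "cpx_map X (core Y) f"
    unfolding cpx_map_def by blast
next
  assume f: "cpx_map X (core Y) f"
  have "snd Y (f x) (f y)" if "{x, y} \<in> snd X" for x y
  proof -
    have "{f x, f y} \<in> snd (core Y)"
      using f that unfolding cpx_map_def by force
    then obtain a b where "{f x, f y} = {a, b}" "snd Y a b"
      unfolding core_def by auto
    then show ?thesis
      using Y unfolding is_lgraph_def doubleton_eq_iff by blast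
  qed
  moreover have "f \<in> fst X \<rightarrow> fst Y"
    using f unfolding cpx_map_def core_def looped_def by auto
  ultimately show "lg_map (incl_l X) Y f"
    unfolding lg_map_def incl_l_def by simp
qed

theorem theorem5p15:
  fixes c_type :: "'c itself"
  shows
  \<comment> \<open>i_l and (-)\<degree> are well-defined and adjoint: Gr_l(i_l X, Y) = Gr(X, Y\<degree>)\<close>
  "(\<forall>(X::'a cpx) (Y::'b lgraph) f. is_rgraph X \<and> is_lgraph Y \<longrightarrow>
       is_lgraph (incl_l X) \<and> is_rgraph (core Y) \<and>
       (lg_map (incl_l X) Y f \<longleftrightarrow> cpx_map X (core Y) f))
   \<comment> \<open>Quillen adjunction: the right adjoint preserves fibrations and trivial fibrations\<close>
   \<and> (\<forall>(E::'b lgraph) (B::'a lgraph) p. is_lgraph E \<and> is_lgraph B \<and> lg_fib E B p \<longrightarrow>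
       gr_fib (core E) (core B) p)
   \<and> (\<forall>(E::'b lgraph) (B::'a lgraph) p. is_lgraph E \<and> is_lgraph B \<and> lg_fib E B p \<and> lg_weq E B p \<longrightarrow>
       gr_fib (core E) (core B) p \<and> gr_weq (core E) (core B) p)
   \<comment> \<open>Quillen equivalence: for cofibrant X and fibrant Y, f : i_l X \<rightarrow> Y is a weak
       equivalence iff its adjunct X \<rightarrow> Y\<degree> is\<close>
   \<and> (\<forall>(X::'a cpx) (Y::'b lgraph) f. gr_cofibrant TYPE('c) X \<and> lg_fibrant Y \<and>
       lg_map (incl_l X) Y f \<longrightarrow>
       (lg_weq (incl_l X) Y f \<longleftrightarrow> gr_weq X (core Y) f))"
proof (intro conjI allI impI)
  fix X :: "'a cpx" and Y :: "'b lgraph" and f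
  assume "is_rgraph X \<and> is_lgraph Y"
  then show "is_lgraph (incl_l X)" "is_rgraph (core Y)"
    "lg_map (incl_l X) Y f \<longleftrightarrow> cpx_map X (core Y) f"
    by (simp_all add: is_lgraph_incl_l is_rgraph_core lg_map_incl_l_iff_cpx_map_core
        is_rgraph_def[of X])
next
  fix X :: "'a cpx" and Y :: "'b lgraph" and f
  assume "gr_cofibrant TYPE('c) X \<and> lg_fibrant Y \<and> lg_map (incl_l X) Y f"
  then have "is_rgraph X" "lg_map (incl_l X) Y f"
    by (auto simp: gr_cofibrant_def)
  then show "lg_weq (incl_l X) Y f \<longleftrightarrow> gr_weq X (core Y) f"
    by (simp add: lg_weq_def core_incl_l)
qed (simp_all add: lg_fib_def lg_weq_def)

end
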